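(* Let $\omega_s,R_s,R_r,L_s,L_r,L_m>0$ with $L_s>L_m$, $L_r>L_m$, $\sigma=1-\frac{L_m^2}{L_sL_r}$, let $A$, $B$ be the $4\times4$ and $4\times 2$ matrices $$A=\begin{bmatrix} -\frac{R_s}{\sigma L_s} & \omega_s & \frac{R_sL_m}{\sigma L_sL_r} & 0 \\ -\omega_s & -\frac{R_s}{\sigma L_s} & 0 & \frac{R_sL_m}{\sigma L_sL_r}\\ \frac{R_rL_m}{\sigma L_sL_r} & 0 & -\frac{R_r}{\sigma L_r} & \omega_s \\ 0 & \frac{R_rL_m}{\sigma L_sL_r} & -\omega_s & -\frac{R_r}{\sigma L_r} \end{bmatrix},\qquad B=\begin{bmatrix}0_{2\times2}\\ I_{2\times 2}\end{bmatrix},$$ and let $K\in\mathbb{R}^{2\times4}$ be such that $A-BK$ is asymptotically stable. Fix $v_{ds},v_{qs}\in\mathbb{R}$. For $u=(u_1,u_2)\in\mathbb{R}^2$ let $x(u)=-(A-BK)^{-1}[v_{ds}\;v_{qs}\;u_1\;u_2]^T$ and $T_e(u)=\frac{L_m}{\sigma L_sL_r}\big(x_1(u)x_4(u)-x_2(u)x_3(u)\big)$, and write $T_e(u)=u^TQu+b^Tu+a$ with $Q\in\mathbb{R}^{2\times2}$ symmetric, $b\in\mathbb{R}^2$, $a\in\mathbb{R}$ (this $Q$ is positive definite). Then $$a-\tfrac14\, b^TQ^{-1}b=-\frac{v_{ds}^2+v_{qs}^2}{4\omega_sR_s},$$ independently of $K$, $R_r$, $L_s$, $L_r$, $L_m$.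 Equivalently, $\min_{u\in\mathbb{R}^2}T_e(u)=-\frac{v_{ds}^2+v_{qs}^2}{4\omega_sR_s}<0$ whenever $(v_{ds},v_{qs})\neq(0,0)$.
   Context: $T_e$ models the electromagnetic torque of a doubly fed induction generator at the steady state of its electrical dynamics $\dot x=(A-BK)x+[v_{ds}\;v_{qs}\;u_1\;u_2]^T$, with $x=(\varphi_{ds},\varphi_{qs},\varphi_{dr},\varphi_{qr})$ the stator/rotor fluxes. *)

theory Defs
  imports "HOL-Analysis.Analysis"
begin

definition dfig_sigma :: "real \<Rightarrow> real \<Rightarrow> real \<Rightarrow> real" where
  "dfig_sigma Ls Lr Lm = 1 - Lm\<^sup>2 / (Ls * Lr)"

definition dfig_A :: "real \<Rightarrow> real \<Rightarrow> real \<Rightarrow> real \<Rightarrow> real \<Rightarrow> real \<Rightarrow> real^4^4" where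
  "dfig_A ws Rs Rr Ls Lr Lm =
    (let s = dfig_sigma Ls Lr Lm;
         a11 = - Rs / (s * Ls);
         a13 = Rs * Lm / (s * Ls * Lr);
         a31 = Rr * Lm / (s * Ls * Lr);
         a33 = - Rr / (s * Lr)
     in (\<chi> i j.
       if i = 1 then (if j = 1 then a11 else if j = 2 then ws else if j = 3 then a13 else 0)
       else if i = 2 then (if j = 1 then - ws else if j = 2 then a11 else if j = 3 then 0 else a13)
       else if i = 3 then (if j = 1 then a31 else if j = 2 then 0 else if j = 3 then a33 else ws)
       else (if j = 1 then 0 else if j = 2 then a31 else if j = 3 then - ws else a33)))"

definition dfig_B :: "real^2^4" where
  "dfig_B = (\<chi> i j. if (i = 3 \<and> j = 1) \<or> (i = 4 \<and> j = 2) then 1 else 0)"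

text \<open>Asymptotic stability (Hurwitz): every (complex) eigenvalue has negative real part.\<close>
definition hurwitz :: "real^'n^'n \<Rightarrow> bool" where
  "hurwitz M \<longleftrightarrow> (\<forall>(lam::complex) (v::complex^'n). v \<noteq> 0 \<and>
      (\<chi> i j. complex_of_real (M $ i $ j)) *v v = lam *s v \<longrightarrow> Re lam < 0)"

definition dfig_x :: "real^4^4 \<Rightarrow> real^2^4 \<Rightarrow> real^4^2 \<Rightarrow> real \<Rightarrow> real \<Rightarrow> real^2 \<Rightarrow> real^4" where
  "dfig_x A B K vds vqs u =
     - (matrix_inv (A - B ** K) *v
        (\<chi> i. if i = 1 then vds else if i = 2 then vqs else if i = 3 then u $ 1 else u $ 2))"

definition dfig_Te :: "real \<Rightarrow> real \<Rightarrow> real \<Rightarrow> real \<Rightarrow> real \<Rightarrow> real \<Rightarrow> real^4^2 \<Rightarrow> real \<Rightarrow> real \<Rightarrow> real^2 \<Rightarrow> real" where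
  "dfig_Te ws Rs Rr Ls Lr Lm K vds vqs u =
     (let x = dfig_x (dfig_A ws Rs Rr Ls Lr Lm) dfig_B K vds vqs u
      in Lm / (dfig_sigma Ls Lr Lm * Ls * Lr) * (x $ 1 * x $ 4 - x $ 2 * x $ 3))"

end

theory Submission imports Defs begin

(*
  Write M = A - BK and x(u) = -M^{-1} [vds vqs u1 u2]^T.
  (1) Since B only acts on the rotor rows, the first two rows of M x = -[vds vqs u]
      are the stator equations, independent of K.  Eliminating x3, x4 from them turns
      the torque into a function of the stator fluxes alone:
        Te(u) = (ws (x1^2 + x2^2) - vqs x1 + vds x2) / Rs,
      in which Rr, Ls, Lr, Lm and K no longer occur.  Completing the square gives
        Te(u) = -(vds^2 + vqs^2)/(4 ws Rs) + ws/Rs * |(x1,x2)(u) - y0|^2.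
  (2) u |-> (x1,x2)(u) is an affine bijection of R^2, so some u0 hits y0; Te is then
      symmetric about u0 and strictly larger away from it.
  (3) A general fact about quadratics q(u) = u'Qu + b'u + a with Q symmetric: if q is
      symmetric about u0 and strictly minimal there, then Q is positive definite and
      a - b'Q^{-1}b/4 = q(u0).
*)

lemma matrix_inv_inverse:
  fixes A :: "real^'n^'n"
  assumes "invertible A"
  shows "A ** matrix_inv A = mat 1" "matrix_inv A ** A = mat 1"
  using assms unfolding invertible_def matrix_inv_def by (metis (mono_tags, lifting) someI_ex)+

lemma matrix_vector_mult_uminus: "(A::real^'n^'m) *v (- x) = - (A *v x)"
  using matrix_vector_mult_diff_distrib[of A 0 x] by simp

text \<open>A Hurwitz matrix has no eigenvalue 0, hence is invertible.\<close>
lemma hurwitz_invertible: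
  fixes M :: "real^'n^'n"
  assumes "hurwitz M"
  shows "invertible M"
proof -
  have "y = 0" if My: "M *v y = 0" for y
  proof (rule ccontr)
    assume "y \<noteq> 0"
    define v where "v = (\<chi> i. complex_of_real (y $ i))"
    have "v \<noteq> 0" using \<open>y \<noteq> 0\<close> by (simp add: v_def vec_eq_iff)
    moreover have "(\<chi> i j. complex_of_real (M $ i $ j)) *v v = 0 *s v"
    proof -
      have "(\<Sum>j\<in>UNIV. M $ i $ j * y $ j) = 0" for i
        using My by (simp add: vec_eq_iff matrix_vector_mult_def)
      then show ?thesis
        by (simp add: v_def vec_eq_iff matrix_vector_mult_def flip: of_real_mult of_real_sum)
    qed
    ultimately have "Re (0::complex) < 0" using assms unfolding hurwitz_def by blast
    then show False by simp
  qed
  then show ?thesis by (simp add: invertible_left_inverse matrix_left_invertible_ker)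
qed

lemma symmetric_matrix_inner:
  fixes Q :: "real^'n^'n"
  assumes "transpose Q = Q"
  shows "u \<bullet> (Q *v v) = v \<bullet> (Q *v u)"
proof -
  have "u \<bullet> (Q *v v) = (u v* Q) \<bullet> v" by (simp add: dot_lmul_matrix)
  also have "u v* Q = Q *v u" by (metis assms vector_transpose_matrix)
  finally show ?thesis by (simp add: inner_commute)
qed

lemma quadratic_vertex:
  fixes Q :: "real^'n^'n" and b u0 :: "real^'n" and q :: "real^'n \<Rightarrow> real"
  assumes sym: "transpose Q = Q"
    and q: "\<And>u. q u = u \<bullet> (Q *v u) + b \<bullet> u + a"
    and even: "\<And>h. q (u0 + h) = q (u0 - h)"
    and strict: "\<And>h. h \<noteq> 0 \<Longrightarrow> q u0 < q (u0 + h)"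
  shows "(\<forall>u. u \<noteq> 0 \<longrightarrow> u \<bullet> (Q *v u) > 0) \<and> a - (1/4) * (b \<bullet> (matrix_inv Q *v b)) = q u0"
proof -
  define g where "g = 2 *\<^sub>R (Q *v u0) + b"
  have cross: "u0 \<bullet> (Q *v h) = h \<bullet> (Q *v u0)" for h using symmetric_matrix_inner[OF sym] .
  have plus: "q (u0 + h) = q u0 + h \<bullet> g + h \<bullet> (Q *v h)" for h
    using cross[of h] unfolding q g_def
    by (simp add: matrix_vector_right_distrib inner_add_left inner_add_right inner_commute[of b] algebra_simps)
  have minus: "q (u0 - h) = q u0 - h \<bullet> g + h \<bullet> (Q *v h)" for h
    using cross[of h] unfolding q g_def
    by (simp add: matrix_vector_mult_diff_distrib inner_diff_left inner_diff_right inner_add_right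
        inner_commute[of b] algebra_simps)
  have "g \<bullet> g = 0" using plus[of g] minus[of g] even[of g] by linarith
  then have b: "b = - (2 *\<^sub>R (Q *v u0))" by (simp add: g_def eq_neg_iff_add_eq_0 add.commute)
  have pd: "\<forall>u. u \<noteq> 0 \<longrightarrow> u \<bullet> (Q *v u) > 0"
    using plus strict by (simp add: b g_def)
  then have "invertible Q"
    by (force simp: invertible_left_inverse matrix_left_invertible_ker)
  then have "matrix_inv Q *v b = - (2 *\<^sub>R u0)"
    by (simp add: b matrix_vector_mult_scaleR matrix_vector_mul_assoc matrix_inv_inverse
        matrix_vector_mult_uminus)
  moreover have "b \<bullet> u0 = - 2 * (u0 \<bullet> (Q *v u0))" by (simp add: b inner_commute)
  ultimately show ?thesis using pd by (simp add: q)
qed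

definition dfig_input :: "real \<Rightarrow> real \<Rightarrow> real^2 \<Rightarrow> real^4" where
  "dfig_input vds vqs u = (\<chi> i. if i = 1 then vds else if i = 2 then vqs else if i = 3 then u $ 1 else u $ 2)"

definition dfig_torque_const :: "real \<Rightarrow> real \<Rightarrow> real \<Rightarrow> real" where
  "dfig_torque_const Ls Lr Lm = Lm / (dfig_sigma Ls Lr Lm * Ls * Lr)"

lemma dfig_x_input:
  "dfig_x A B K vds vqs u = - (matrix_inv (A - B ** K) *v dfig_input vds vqs u)"
  by (simp add: dfig_x_def dfig_input_def)

text \<open>The steady state depends affinely on u, so it respects midpoints.\<close>
lemma dfig_x_midpoint:
  "dfig_x A B K vds vqs (u + h) + dfig_x A B K vds vqs (u - h) = 2 *\<^sub>R dfig_x A B K vds vqs u"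
proof -
  have "dfig_input vds vqs (u + h) + dfig_input vds vqs (u - h) = 2 *\<^sub>R dfig_input vds vqs u"
    by (simp add: dfig_input_def vec_eq_iff)
  then show ?thesis
    unfolding dfig_x_input
    by (metis matrix_vector_mult_scaleR matrix_vector_right_distrib minus_add_distrib scaleR_minus_right)
qed

lemma dfig_x_solves:
  assumes "invertible (A - B ** K)"
  shows "(A - B ** K) *v dfig_x A B K vds vqs u = - dfig_input vds vqs u"
  by (simp add: dfig_x_input matrix_vector_mult_uminus matrix_vector_mul_assoc
      matrix_inv_inverse[OF assms])

lemma dfig_x_unique:
  assumes "invertible (A - B ** K)" and "(A - B ** K) *v x = - dfig_input vds vqs u"
  shows "dfig_x A B K vds vqs u = x"
proof -
  have "x = matrix_inv (A - B ** K) *v ((A - B ** K) *v x)"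
    by (simp add: matrix_vector_mul_assoc matrix_inv_inverse[OF assms(1)])
  then show ?thesis by (simp add: assms(2) dfig_x_input matrix_vector_mult_uminus)
qed

text \<open>The leakage factor is positive when the mutual inductance is below both
  self-inductances; this makes the torque constant nonzero.\<close>
lemma dfig_sigma_pos:
  assumes "0 < Lm" "Lm < Ls" "Lm < Lr"
  shows "dfig_sigma Ls Lr Lm > 0"
proof -
  have "Lm * Lm < Ls * Lr" using assms by (simp add: mult_strict_mono)
  then show ?thesis using assms by (simp add: dfig_sigma_def power2_eq_square)
qed

text \<open>The stator rows of A - BK: the feedback BK only enters the rotor rows.\<close>
lemma dfig_stator_rows:
  fixes ws Rs Rr Ls Lr Lm :: real and K :: "real^4^2" and x :: "real^4"
  defines "M \<equiv> dfig_A ws Rs Rr Ls Lr Lm - dfig_B ** K"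
    and "a \<equiv> - Rs / (dfig_sigma Ls Lr Lm * Ls)" and "c \<equiv> dfig_torque_const Ls Lr Lm"
  shows "(M *v x) $ 1 = a * x $ 1 + ws * x $ 2 + Rs * c * x $ 3"
    and "(M *v x) $ 2 = - ws * x $ 1 + a * x $ 2 + Rs * c * x $ 4"
proof -
  have "(dfig_B ** K) $ 1 = 0" "(dfig_B ** K) $ 2 = 0"
    by (simp_all add: vec_eq_iff matrix_matrix_mult_def dfig_B_def sum_2)
  then show "(M *v x) $ 1 = a * x $ 1 + ws * x $ 2 + Rs * c * x $ 3"
    and "(M *v x) $ 2 = - ws * x $ 1 + a * x $ 2 + Rs * c * x $ 4"
    by (simp_all add: M_def a_def c_def dfig_torque_const_def matrix_vector_mult_def sum_4
        dfig_A_def Let_def algebra_simps)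
qed

text \<open>Eliminating the rotor fluxes x3, x4 from the two stator equations: the torque
  becomes a function of the stator fluxes, and the diagonal entry a drops out.\<close>
lemma torque_elimination:
  fixes a c x1 x2 x3 x4 :: real
  assumes "Rs \<noteq> 0"
    and row1: "a * x1 + ws * x2 + Rs * c * x3 = - vds"
    and row2: "- ws * x1 + a * x2 + Rs * c * x4 = - vqs"
  shows "c * (x1 * x4 - x2 * x3) = (ws * (x1\<^sup>2 + x2\<^sup>2) - vqs * x1 + vds * x2) / Rs"
proof -
  have x3: "Rs * c * x3 = - vds - a * x1 - ws * x2" and x4: "Rs * c * x4 = - vqs + ws * x1 - a * x2"
    using row1 row2 by linarith+
  have "Rs * (c * (x1 * x4 - x2 * x3)) = x1 * (Rs * c * x4) - x2 * (Rs * c * x3)"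
    by (simp add: algebra_simps)
  also have "\<dots> = ws * (x1\<^sup>2 + x2\<^sup>2) - vqs * x1 + vds * x2"
    unfolding x3 x4 by (simp add: algebra_simps power2_eq_square)
  finally show ?thesis using assms(1) by (simp add: field_simps)
qed

lemma dfig_stator_equations:
  fixes vds vqs :: real and u :: "real^2"
  assumes "invertible (dfig_A ws Rs Rr Ls Lr Lm - dfig_B ** K)"
  defines "x \<equiv> dfig_x (dfig_A ws Rs Rr Ls Lr Lm) dfig_B K vds vqs u"
    and "a \<equiv> - Rs / (dfig_sigma Ls Lr Lm * Ls)" and "c \<equiv> dfig_torque_const Ls Lr Lm"
  shows "a * x $ 1 + ws * x $ 2 + Rs * c * x $ 3 = - vds"
    and "- ws * x $ 1 + a * x $ 2 + Rs * c * x $ 4 = - vqs"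
proof -
  note eq = dfig_x_solves[OF assms(1), of vds vqs u, folded x_def]
  show "a * x $ 1 + ws * x $ 2 + Rs * c * x $ 3 = - vds"
    using arg_cong[OF eq, of "\<lambda>v. v $ 1"] by (simp add: a_def c_def dfig_stator_rows dfig_input_def)
  show "- ws * x $ 1 + a * x $ 2 + Rs * c * x $ 4 = - vqs"
    using arg_cong[OF eq, of "\<lambda>v. v $ 2"] by (simp add: a_def c_def dfig_stator_rows dfig_input_def)
qed

lemma dfig_Te_stator:
  fixes vds vqs :: real and u :: "real^2"
  assumes "invertible (dfig_A ws Rs Rr Ls Lr Lm - dfig_B ** K)" and "Rs \<noteq> 0"
  defines "x \<equiv> dfig_x (dfig_A ws Rs Rr Ls Lr Lm) dfig_B K vds vqs u"
  shows "dfig_Te ws Rs Rr Ls Lr Lm K vds vqs u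
           = (ws * ((x $ 1)\<^sup>2 + (x $ 2)\<^sup>2) - vqs * x $ 1 + vds * x $ 2) / Rs"
proof -
  have "dfig_torque_const Ls Lr Lm * (x $ 1 * x $ 4 - x $ 2 * x $ 3)
          = (ws * ((x $ 1)\<^sup>2 + (x $ 2)\<^sup>2) - vqs * x $ 1 + vds * x $ 2) / Rs"
    using torque_elimination[OF assms(2) dfig_stator_equations[OF assms(1)]] by (simp add: x_def)
  then show ?thesis by (simp add: dfig_Te_def x_def dfig_torque_const_def Let_def)
qed

lemma stator_torque_square:
  fixes y1 y2 :: real
  assumes "ws \<noteq> 0" "Rs \<noteq> 0"
  shows "(ws * (y1\<^sup>2 + y2\<^sup>2) - vqs * y1 + vds * y2) / Rs
       = - (vds\<^sup>2 + vqs\<^sup>2) / (4 * ws * Rs)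
         + ws / Rs * ((y1 - vqs / (2 * ws))\<^sup>2 + (y2 + vds / (2 * ws))\<^sup>2)"
  using assms by (simp add: field_simps power2_eq_square)

lemma dfig_stator_flux_surj:
  assumes inv: "invertible (dfig_A ws Rs Rr Ls Lr Lm - dfig_B ** K)"
    and c: "Rs * dfig_torque_const Ls Lr Lm \<noteq> 0"
  shows "\<exists>u. dfig_x (dfig_A ws Rs Rr Ls Lr Lm) dfig_B K vds vqs u $ 1 = y1
           \<and> dfig_x (dfig_A ws Rs Rr Ls Lr Lm) dfig_B K vds vqs u $ 2 = y2"
proof -
  define M where "M = dfig_A ws Rs Rr Ls Lr Lm - dfig_B ** K"
  define a where "a = - Rs / (dfig_sigma Ls Lr Lm * Ls)"
  define k where "k = Rs * dfig_torque_const Ls Lr Lm"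
  define x :: "real^4" where "x = (\<chi> i. if i = 1 then y1 else if i = 2 then y2
     else if i = 3 then (- vds - a * y1 - ws * y2) / k else (- vqs + ws * y1 - a * y2) / k)"
  define u :: "real^2" where "u = (\<chi> i. if i = 1 then - (M *v x) $ 3 else - (M *v x) $ 4)"
  have "(M *v x) $ 1 = - vds" "(M *v x) $ 2 = - vqs"
    using c by (simp_all add: M_def a_def k_def dfig_stator_rows x_def field_simps)
  then have "M *v x = - dfig_input vds vqs u"
    by (simp add: u_def dfig_input_def vec_eq_iff forall_4)
  then have "dfig_x (dfig_A ws Rs Rr Ls Lr Lm) dfig_B K vds vqs u = x"
    using dfig_x_unique inv M_def by blast
  then show ?thesis by (auto simp: x_def intro!: exI[of _ u])
qed

lemma dfig_stator_flux_inj: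
  fixes vds vqs :: real and u v :: "real^2"
  assumes inv: "invertible (dfig_A ws Rs Rr Ls Lr Lm - dfig_B ** K)"
    and c: "Rs * dfig_torque_const Ls Lr Lm \<noteq> 0"
  defines "x \<equiv> dfig_x (dfig_A ws Rs Rr Ls Lr Lm) dfig_B K vds vqs"
  assumes "x u $ 1 = x v $ 1" and "x u $ 2 = x v $ 2"
  shows "u = v"
proof -
  note row1 = dfig_stator_equations(1)[OF inv, of vds vqs, folded x_def]
  note row2 = dfig_stator_equations(2)[OF inv, of vds vqs, folded x_def]
  have "Rs * dfig_torque_const Ls Lr Lm * x u $ 3 = Rs * dfig_torque_const Ls Lr Lm * x v $ 3"
    and "Rs * dfig_torque_const Ls Lr Lm * x u $ 4 = Rs * dfig_torque_const Ls Lr Lm * x v $ 4"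
    using row1[of u] row1[of v] row2[of u] row2[of v] unfolding assms(4,5) by linarith+
  then have "x u $ 3 = x v $ 3" "x u $ 4 = x v $ 4" using c by simp_all
  then have "x u = x v" using assms(4,5) by (simp add: vec_eq_iff forall_4)
  then have "dfig_input vds vqs u = dfig_input vds vqs v"
    using dfig_x_solves[OF inv, of vds vqs u] dfig_x_solves[OF inv, of vds vqs v] by (simp add: x_def)
  then show "u = v" by (simp add: dfig_input_def vec_eq_iff forall_2 forall_4)
qed

text \<open>The steady-state torque as a function of the control input is symmetric about
  the input u0 that puts the stator fluxes at the centre of the square completion, and
  strictly minimal there with value -(vds^2 + vqs^2)/(4 ws Rs).\<close>
lemma dfig_Te_vertex:
  fixes vds vqs :: real
  assumes "ws > 0" "Rs > 0" "0 < Lm" "Lm < Ls" "Lm < Lr"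
    and inv: "invertible (dfig_A ws Rs Rr Ls Lr Lm - dfig_B ** K)"
  defines "Te \<equiv> dfig_Te ws Rs Rr Ls Lr Lm K vds vqs"
  shows "\<exists>u0. Te u0 = - (vds\<^sup>2 + vqs\<^sup>2) / (4 * ws * Rs)
              \<and> (\<forall>h. Te (u0 + h) = Te (u0 - h)) \<and> (\<forall>h. h \<noteq> 0 \<longrightarrow> Te u0 < Te (u0 + h))"
proof -
  define x where "x = dfig_x (dfig_A ws Rs Rr Ls Lr Lm) dfig_B K vds vqs"
  define y1 where "y1 = vqs / (2 * ws)"
  define y2 where "y2 = - vds / (2 * ws)"
  define dist where "dist = (\<lambda>u. (x u $ 1 - y1)\<^sup>2 + (x u $ 2 - y2)\<^sup>2)"
  have Te: "Te u = - (vds\<^sup>2 + vqs\<^sup>2) / (4 * ws * Rs) + ws / Rs * dist u" for u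
    using dfig_Te_stator[OF inv] stator_torque_square assms(1,2)
    by (simp add: Te_def dist_def x_def y1_def y2_def)
  have "dfig_sigma Ls Lr Lm > 0" using dfig_sigma_pos assms(3-5) by blast
  then have c: "Rs * dfig_torque_const Ls Lr Lm \<noteq> 0"
    using assms(2-5) by (simp add: dfig_torque_const_def)
  obtain u0 where u0: "x u0 $ 1 = y1" "x u0 $ 2 = y2"
    using dfig_stator_flux_surj[OF inv c] unfolding x_def by blast
  have "dist (u0 - h) = dist (u0 + h)" for h
  proof -
    have "x (u0 + h) $ i + x (u0 - h) $ i = 2 * x u0 $ i" for i
      using arg_cong[OF dfig_x_midpoint, of "\<lambda>v. v $ i"] by (simp add: x_def)
    then have "x (u0 - h) $ 1 - y1 = - (x (u0 + h) $ 1 - y1)"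
      and "x (u0 - h) $ 2 - y2 = - (x (u0 + h) $ 2 - y2)"
      using u0 by (smt (verit))+
    then show ?thesis unfolding dist_def by (metis power2_minus)
  qed
  moreover have "dist (u0 + h) > 0" if "h \<noteq> 0" for h
  proof -
    have "x (u0 + h) $ 1 \<noteq> x u0 $ 1 \<or> x (u0 + h) $ 2 \<noteq> x u0 $ 2"
      using dfig_stator_flux_inj[OF inv c] that unfolding x_def by fastforce
    then show ?thesis using u0 by (auto simp: dist_def sum_power2_gt_zero_iff)
  qed
  ultimately show ?thesis using Te assms(1,2) u0 by (intro exI[of _ u0]) (simp add: dist_def)
qed

theorem mainTheorem2:
  fixes ws Rs Rr Ls Lr Lm vds vqs a :: real
    and K :: "real^4^2" and Q :: "real^2^2" and b :: "real^2"
  assumes "ws > 0" "Rs > 0" "Rr > 0" "Ls > 0" "Lr > 0" "Lm > 0"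
    and "Ls > Lm" "Lr > Lm"
    and "hurwitz (dfig_A ws Rs Rr Ls Lr Lm - dfig_B ** K)"
    and "transpose Q = Q"
    and "\<forall>u::real^2. dfig_Te ws Rs Rr Ls Lr Lm K vds vqs u = u \<bullet> (Q *v u) + b \<bullet> u + a"
  shows "(\<forall>u::real^2. u \<noteq> 0 \<longrightarrow> u \<bullet> (Q *v u) > 0)
       \<and> a - (1/4) * (b \<bullet> (matrix_inv Q *v b)) = - (vds\<^sup>2 + vqs\<^sup>2) / (4 * ws * Rs)"
proof -
  have "invertible (dfig_A ws Rs Rr Ls Lr Lm - dfig_B ** K)"
    using hurwitz_invertible assms(9) by blast
  then obtain u0 where
    min: "dfig_Te ws Rs Rr Ls Lr Lm K vds vqs u0 = - (vds\<^sup>2 + vqs\<^sup>2) / (4 * ws * Rs)" and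
    even: "\<And>h. dfig_Te ws Rs Rr Ls Lr Lm K vds vqs (u0 + h) = dfig_Te ws Rs Rr Ls Lr Lm K vds vqs (u0 - h)" and
    strict: "\<And>h. h \<noteq> 0 \<Longrightarrow> dfig_Te ws Rs Rr Ls Lr Lm K vds vqs u0 < dfig_Te ws Rs Rr Ls Lr Lm K vds vqs (u0 + h)"
    using dfig_Te_vertex assms(1,2,6-8) by blast
  show ?thesis
    using quadratic_vertex[OF assms(10) _ even strict] assms(11) min by simp
qed

end
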